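(* Let $\gamma,\delta$ be positive integers, let $\varphi_{\gamma,\delta}(z)=(1+z)^{\gamma}(1+z^{-1})^{\delta}$, let $\mu$ be a partition of length $M=l(\mu)$, and let $N\ge M$. Then $$D_N^{\varnothing,\mu}(\varphi_{\gamma,\delta})=D_N(\varphi_{\gamma,\delta})\,\frac{G(N-M+1)}{G(N+1)}\,\frac{G(\delta+N+1)}{G(\delta+N-M+1)}\,s_{\mu'}(1^{\gamma})\prod_{k=1}^{M}\frac{(\mu_k+N-k)!}{(\delta+\mu_k+N-k)!}.$$
   Context: For a Laurent polynomial $f(z)=\sum_kd_kz^k$, $D_N(f)=\det(d_{j-k})_{j,k=1}^N$ and $D_N^{\varnothing,\mu}(f)=\det(d_{j-k+\mu_k})_{j,k=1}^N$, with $\mu_k=0$ for $k>l(\mu)$. Here $d_k=\binom{\gamma+\delta}{\delta+k}$ for $-\delta\le k\le\gamma$ and $0$ otherwise. $\mu'$ is the conjugate partition, and $s_{\mu'}(1^\gamma)$ is the Schur polynomial evaluated at $\gamma$ variables equal to $1$. $G$ is the Barnes $G$-function ($G(1)=1$, $G(z+1)=\Gamma(z)G(z)$). *)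

theory Defs
  imports Complex_Main "Jordan_Normal_Form.Determinant"
begin

text \<open>Laurent coefficients of phi_{gamma,delta}(z) = (1+z)^gamma (1+1/z)^delta:
  d_k = binom(gamma+delta, delta+k) for -delta <= k <= gamma, 0 otherwise.\<close>
definition phi_coeff :: "nat \<Rightarrow> nat \<Rightarrow> int \<Rightarrow> real" where
  "phi_coeff \<gamma> \<delta> k =
     (if - int \<delta> \<le> k \<and> k \<le> int \<gamma> then real ((\<gamma> + \<delta>) choose nat (int \<delta> + k)) else 0)"

definition is_partition :: "nat list \<Rightarrow> bool" where
  "is_partition \<mu> \<longleftrightarrow> sorted (rev \<mu>) \<and> (\<forall>x\<in>set \<mu>. 0 < x)"

definition part_nth :: "nat list \<Rightarrow> nat \<Rightarrow> nat" where
  "part_nth \<mu> k = (if 1 \<le> k \<and> k \<le> length \<mu> then \<mu> ! (k - 1) else 0)"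

text \<open>Toeplitz determinant D_N(f) = det(d_{j-k})_{j,k=1}^N (indices shifted to 0..N-1).\<close>
definition toeplitz_det :: "(int \<Rightarrow> real) \<Rightarrow> nat \<Rightarrow> real" where
  "toeplitz_det d N = det (mat N N (\<lambda>(j,k). d (int j - int k)))"

text \<open>D_N^{empty,mu}(f) = det(d_{j-k+mu_k})_{j,k=1}^N.\<close>
definition toeplitz_det_mu :: "(int \<Rightarrow> real) \<Rightarrow> nat list \<Rightarrow> nat \<Rightarrow> real" where
  "toeplitz_det_mu d \<mu> N =
     det (mat N N (\<lambda>(j,k). d ((int (j+1)) - int (k+1) + int (part_nth \<mu> (k+1)))))"

definition conj_part :: "nat list \<Rightarrow> nat list" where
  "conj_part \<mu> = map (\<lambda>j. card {i. i < length \<mu> \<and> j < \<mu> ! i})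
                      [0..<(if \<mu> = [] then 0 else hd \<mu>)]"

text \<open>Young diagram cells (0-based (row, column)).\<close>
definition cells :: "nat list \<Rightarrow> (nat \<times> nat) set" where
  "cells la = {(i,j). i < length la \<and> j < la ! i}"

definition SSYT :: "nat list \<Rightarrow> nat \<Rightarrow> ((nat \<times> nat) \<Rightarrow> nat) set" where
  "SSYT la n = {T. (\<forall>c\<in>cells la. T c \<in> {1..n}) \<and> (\<forall>c. c \<notin> cells la \<longrightarrow> T c = 0)
      \<and> (\<forall>i j. (i, Suc j) \<in> cells la \<longrightarrow> T (i, j) \<le> T (i, Suc j))
      \<and> (\<forall>i j. (Suc i, j) \<in> cells la \<longrightarrow> T (i, j) < T (Suc i, j))}"

definition schur_eval :: "nat list \<Rightarrow> nat \<Rightarrow> (nat \<Rightarrow> real) \<Rightarrow> real" where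
  "schur_eval la n x = (\<Sum>T\<in>SSYT la n. \<Prod>c\<in>cells la. x (T c))"

fun barnesG :: "nat \<Rightarrow> real" where
  "barnesG 0 = 0"
| "barnesG (Suc 0) = 1"
| "barnesG (Suc (Suc n)) = fact n * barnesG (Suc n)"

end

theory Submission
  imports Defs
begin

text \<open>
  Write \<open>h k = \<mu>\<^sub>k\<^sub>+\<^sub>1\<close>. Both Toeplitz matrices have binomial entries
  \<open>(\<gamma>+\<delta>) choose (\<delta> + h k - k + j)\<close>, and \<open>s\<^bsub>\<mu>'\<^esub>(1\<^sup>\<gamma>)\<close>, the number of semistandard tableaux
  of shape \<open>\<mu>'\<close>, i.e. with column heights \<open>h k\<close>, equals the dual Jacobi-Trudi determinant
  \<open>det (\<gamma> choose (h k - k + j))\<close>; this is proved by induction on \<open>\<gamma>\<close>, Pascal's rule in every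
  column matching the removal of the entries \<open>\<gamma>\<close> from a tableau.
  Clearing factorials, \<open>n choose (y + j)\<close> is a polynomial of degree \<open>< N\<close> in \<open>y\<close> times a weight
  depending on \<open>y\<close> only, so each of these determinants is a constant times the Vandermonde
  determinant of the shifted heights times a product of weights. The Toeplitz minor and the Schur
  determinant share the Vandermonde factor, so comparing both with the case \<open>h = 0\<close> leaves a
  product of factorial ratios, which telescopes into the Barnes \<open>G\<close>-values.
\<close>

section \<open>Determinants of matrices given by entry functions\<close>

lemma det_mat_eq_sum_permutes:
  "det (mat N N (\<lambda>(j,k). f j k)) =
    (\<Sum>p | p permutes {..<N}. of_int (sign p) * (\<Prod>i<N. f i (p i)))"
  by (subst det_def'[where n=N]) (auto simp: atLeast0LessThan intro!: sum.cong prod.cong)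

lemma det_mat_scale_cols:
  fixes f :: "nat \<Rightarrow> nat \<Rightarrow> 'a::comm_ring_1"
  shows "det (mat N N (\<lambda>(j,k). f j k * c k)) = (\<Prod>k<N. c k) * det (mat N N (\<lambda>(j,k). f j k))"
proof -
  have "(\<Prod>i<N. f i (p i) * c (p i)) = (\<Prod>k<N. c k) * (\<Prod>i<N. f i (p i))"
    if p: "p permutes {..<N}" for p
  proof -
    have "(\<Prod>i<N. c (p i)) = (\<Prod>k<N. c k)"
      using prod.permute[OF p, of c] by (simp add: comp_def)
    then show ?thesis by (simp add: prod.distrib mult.commute)
  qed
  then show ?thesis unfolding det_mat_eq_sum_permutes sum_distrib_left
    by (intro sum.cong) (auto simp: mult.left_commute)
qed

lemma det_mat_zero_col:
  fixes f :: "nat \<Rightarrow> nat \<Rightarrow> 'a::comm_ring_1"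
  assumes "k < N" "\<And>j. j < N \<Longrightarrow> f j k = 0"
  shows "det (mat N N (\<lambda>(j,k). f j k)) = 0"
  unfolding det_mat_eq_sum_permutes
proof (rule sum.neutral, clarify)
  fix p assume "p permutes {..<N}"
  then obtain i where "i < N" "p i = k" using assms(1)
    by (metis lessThan_iff permutes_def)
  then show "of_int (sign p) * (\<Prod>i<N. f i (p i)) = 0"
    using assms(2) by (metis finite_lessThan lessThan_iff mult_zero_right prod_zero)
qed

lemma det_mat_equal_cols:
  fixes f :: "nat \<Rightarrow> nat \<Rightarrow> 'a::comm_ring_1"
  assumes "k < N" "l < N" "k \<noteq> l" "\<And>j. j < N \<Longrightarrow> f j k = f j l"
  shows "det (mat N N (\<lambda>(j,k). f j k)) = 0"
  by (rule det_identical_columns[of _ N k l]) (use assms in auto)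

lemma det_mat_transpose: "det (mat N N (\<lambda>(j,k). f j k)) = det (mat N N (\<lambda>(j,k). f k j))"
proof -
  have "det (mat N N (\<lambda>(j,k). f j k)) = det (transpose_mat (mat N N (\<lambda>(j,k). f j k)))"
    by (rule det_transpose[symmetric]) auto
  also have "transpose_mat (mat N N (\<lambda>(j,k). f j k)) = mat N N (\<lambda>(j,k). f k j)"
    by (rule eq_matI) auto
  finally show ?thesis .
qed

lemma det_mat_add_rows:
  fixes f g :: "nat \<Rightarrow> nat \<Rightarrow> 'a::comm_ring_1"
  shows "det (mat N N (\<lambda>(j,k). f j k + g j k)) =
    (\<Sum>S\<in>Pow {..<N}. det (mat N N (\<lambda>(j,k). if j \<in> S then g j k else f j k)))"
proof -
  have expand: "(\<Prod>i<N. f i (p i) + g i (p i)) =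
      (\<Sum>S\<in>Pow {..<N}. \<Prod>i<N. if i \<in> S then g i (p i) else f i (p i))" for p
  proof -
    have "(\<Prod>i<N. f i (p i) + g i (p i)) = (\<Prod>i<N. g i (p i) + f i (p i))"
      by (simp add: add.commute)
    also have "\<dots> = (\<Sum>S\<in>Pow {..<N}. (\<Prod>i\<in>S. g i (p i)) * (\<Prod>i\<in>{..<N} - S. f i (p i)))"
      by (rule prod_add) simp
    also have "\<dots> = (\<Sum>S\<in>Pow {..<N}. \<Prod>i<N. if i \<in> S then g i (p i) else f i (p i))"
    proof (rule sum.cong[OF refl])
      fix S assume "S \<in> Pow {..<N}"
      then have "{..<N} \<inter> {i. i \<in> S} = S" "{..<N} \<inter> - {i. i \<in> S} = {..<N} - S" by auto
      then show "(\<Prod>i\<in>S. g i (p i)) * (\<Prod>i\<in>{..<N} - S. f i (p i)) =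
          (\<Prod>i<N. if i \<in> S then g i (p i) else f i (p i))"
        by (simp add: prod.If_cases)
    qed
    finally show ?thesis .
  qed
  show ?thesis
    unfolding det_mat_eq_sum_permutes expand sum_distrib_left
    by (subst sum.swap) (auto intro!: sum.cong prod.cong)
qed

lemma det_mat_add_cols:
  fixes f g :: "nat \<Rightarrow> nat \<Rightarrow> 'a::comm_ring_1"
  shows "det (mat N N (\<lambda>(j,k). f j k + g j k)) =
    (\<Sum>S\<in>Pow {..<N}. det (mat N N (\<lambda>(j,k). if k \<in> S then g j k else f j k)))"
  by (subst (1 2) det_mat_transpose, subst det_mat_add_rows) simp

lemma det_mat_poly_columns:
  fixes p :: "nat \<Rightarrow> 'a::comm_ring_1 poly"
  assumes "\<And>j. j < N \<Longrightarrow> degree (p j) < N"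
  shows "det (mat N N (\<lambda>(j,k). poly (p j) (z k) * w k)) =
    det (mat N N (\<lambda>(j,m). coeff (p j) m)) * det (mat N N (\<lambda>(m,k). z k ^ m)) * (\<Prod>k<N. w k)"
proof -
  define C where "C = mat N N (\<lambda>(j,m). coeff (p j) m)"
  define V where "V = mat N N (\<lambda>(m,k). z k ^ m)"
  have "poly (p j) (z k) = (C * V) $$ (j,k)" if "j < N" "k < N" for j k
  proof -
    have "poly (p j) (z k) = (\<Sum>m<N. coeff (p j) m * z k ^ m)"
      unfolding poly_altdef
      by (rule sum.mono_neutral_left) (use assms[of j] that in \<open>auto simp: coeff_eq_0\<close>)
    then show ?thesis
      using that by (auto simp: C_def V_def scalar_prod_def atLeast0LessThan intro!: sum.cong)
  qed
  then have "det (mat N N (\<lambda>(j,k). poly (p j) (z k) * w k)) =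
      (\<Prod>k<N. w k) * det (mat N N (\<lambda>(j,k). (C * V) $$ (j,k)))"
    by (simp add: det_mat_scale_cols cong: cong_mat)
  also have "mat N N (\<lambda>(j,k). (C * V) $$ (j,k)) = C * V"
    by (rule eq_matI) (auto simp: C_def V_def)
  also have "det (C * V) = det C * det V"
    by (rule det_mult) (auto simp: C_def V_def)
  finally show ?thesis by (simp add: C_def V_def)
qed

section \<open>Binomial coefficients as functions of an integer argument\<close>

definition binom_int :: "nat \<Rightarrow> int \<Rightarrow> real" where
  "binom_int n t = (if 0 \<le> t \<and> t \<le> int n then real (n choose nat t) else 0)"

lemma binom_int_Suc: "binom_int (Suc n) t = binom_int n t + binom_int n (t - 1)"
proof -
  consider "t \<le> 0" | "0 < t" "t \<le> int n" | "t = int n + 1" | "t > int n + 1" by linarith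
  then show ?thesis
  proof cases
    case 2
    then have "nat t = Suc (nat (t - 1))" by linarith
    then show ?thesis using 2 by (simp add: binom_int_def)
  next
    case 3
    then have "nat t = Suc n" "nat (t - 1) = n" by auto
    then show ?thesis using 3 by (simp add: binom_int_def)
  qed (auto simp: binom_int_def)
qed

lemma fact_add_eq_fact_mult_prod: "(fact (t + m) :: real) = fact t * (\<Prod>d<m. real (t + 1 + d))"
  by (induction m) (auto simp: algebra_simps)

text \<open>Outside \<open>0 \<le> y + j \<le> n\<close> the binomial coefficient vanishes, and so does one of the
  two products on the right.\<close>
lemma binom_int_mult_facts:
  fixes y :: int
  assumes "0 \<le> y + int N - 1" "y \<le> int n" "j < N"
  shows "binom_int n (y + int j) * fact (nat (y + int N - 1)) * fact (nat (int n - y)) =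
    fact n * (\<Prod>i\<in>{j+1..<N}. of_int (y + int i)) * (\<Prod>i<j. of_int (int n - y - int i))"
proof (cases "y + int j < 0 \<or> int n < y + int j")
  case True
  then consider "y + int j < 0" | "int n < y + int j" by blast
  then have "(\<Prod>i\<in>{j+1..<N}. real_of_int (y + int i)) = 0 \<or> (\<Prod>i<j. real_of_int (int n - y - int i)) = 0"
  proof cases
    case 1
    then show ?thesis using assms by (auto intro!: bexI[where x="nat (-y)"])
  next
    case 2
    then show ?thesis using assms by (auto intro!: bexI[where x="nat (int n - y)"])
  qed
  then show ?thesis using True by (auto simp: binom_int_def)
next
  case False
  define t where "t = nat (y + int j)"
  have t: "int t = y + int j" "t \<le> n" using False by (auto simp: t_def)
  have facts: "nat (y + int N - 1) = t + (N - 1 - j)" "nat (int n - y) = (n - t) + j"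
    using t assms by linarith+
  have "(\<Prod>i\<in>{j+1..<N}. real_of_int (y + int i)) = (\<Prod>d<N-1-j. real_of_int (y + int (d + (j+1))))"
    using prod.shift_bounds_nat_ivl[of "\<lambda>i. real_of_int (y + int i)" 0 "j+1" "N-1-j"] assms(3)
    by (simp add: atLeast0LessThan)
  also have "\<dots> = (\<Prod>d<N-1-j. real (t + 1 + d))"
    by (rule prod.cong) (use t in auto)
  finally have upper: "(\<Prod>i\<in>{j+1..<N}. real_of_int (y + int i)) = (\<Prod>d<N-1-j. real (t + 1 + d))" .
  have "(\<Prod>i<j. real_of_int (int n - y - int i)) = (\<Prod>i<j. real_of_int (int n - y - int (j - Suc i)))"
    by (rule prod.nat_diff_reindex[symmetric])
  also have "\<dots> = (\<Prod>d<j. real (n - t + 1 + d))"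
    by (rule prod.cong) (use t in auto)
  finally have lower: "(\<Prod>i<j. real_of_int (int n - y - int i)) = (\<Prod>d<j. real (n - t + 1 + d))" .
  have "fact t * fact (n - t) * real (n choose t) = (fact n :: real)"
    using binomial_fact_lemma[OF t(2)] by (metis of_nat_fact of_nat_mult)
  moreover have "binom_int n (y + int j) = real (n choose t)"
    using False by (simp add: binom_int_def t_def)
  ultimately show ?thesis
    unfolding facts upper lower fact_add_eq_fact_mult_prod by (simp add: algebra_simps)
qed

definition binom_poly :: "nat \<Rightarrow> nat \<Rightarrow> int \<Rightarrow> nat \<Rightarrow> real poly" where
  "binom_poly n N s j =
    (\<Prod>i\<in>{j+1..<N}. [:of_int (int i - s), 1:]) * (\<Prod>i<j. [:of_int (int n + s - int i), -1:])"

definition binom_weight :: "nat \<Rightarrow> nat \<Rightarrow> int \<Rightarrow> real" where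
  "binom_weight n N y = fact n / (fact (nat (y + int N - 1)) * fact (nat (int n - y)))"

lemma degree_binom_poly:
  assumes "j < N"
  shows "degree (binom_poly n N s j) < N"
proof -
  have "degree (\<Prod>i\<in>{j+1..<N}. [:of_int (int i - s), 1::real:]) \<le> N - 1 - j"
    by (rule order.trans[OF degree_prod_sum_le]) (auto intro!: order.trans[OF sum_mono[where g="\<lambda>_. 1"]])
  moreover have "degree (\<Prod>i<j. [:of_int (int n + s - int i), -1::real:]) \<le> j"
    by (rule order.trans[OF degree_prod_sum_le]) (auto intro!: order.trans[OF sum_mono[where g="\<lambda>_. 1"]])
  ultimately show ?thesis
    using degree_mult_le[of "\<Prod>i\<in>{j+1..<N}. [:of_int (int i - s), 1::real:]"
        "\<Prod>i<j. [:of_int (int n + s - int i), -1::real:]"] assms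
    unfolding binom_poly_def by linarith
qed

lemma binom_int_eq_poly_mult_weight:
  assumes "0 \<le> x - s + int N - 1" "x - s \<le> int n" "j < N"
  shows "binom_int n (x - s + int j) = poly (binom_poly n N s j) (of_int x) * binom_weight n N (x - s)"
proof -
  have "poly (binom_poly n N s j) (of_int x) =
      (\<Prod>i\<in>{j+1..<N}. of_int (x - s + int i)) * (\<Prod>i<j. of_int (int n - (x - s) - int i))"
    by (simp add: binom_poly_def poly_prod algebra_simps)
  moreover have "(fact (nat (x - s + int N - 1)) :: real) * fact (nat (int n - (x - s))) \<noteq> 0"
    by simp
  ultimately show ?thesis
    using binom_int_mult_facts[OF assms] by (simp add: binom_weight_def field_simps)
qed

lemma det_binom_int_factor:
  assumes "\<And>k. k < N \<Longrightarrow> 0 \<le> x k - s + int N - 1 \<and> x k - s \<le> int n"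
  shows "det (mat N N (\<lambda>(j,k). binom_int n (x k - s + int j))) =
    det (mat N N (\<lambda>(j,m). coeff (binom_poly n N s j) m)) * det (mat N N (\<lambda>(m,k). of_int (x k) ^ m))
    * (\<Prod>k<N. binom_weight n N (x k - s))"
proof -
  have "mat N N (\<lambda>(j,k). binom_int n (x k - s + int j)) =
      mat N N (\<lambda>(j,k). poly (binom_poly n N s j) (of_int (x k)) * binom_weight n N (x k - s))"
    by (intro cong_mat) (use assms in \<open>auto intro: binom_int_eq_poly_mult_weight\<close>)
  then show ?thesis
    by (simp add: det_mat_poly_columns degree_binom_poly)
qed

section \<open>Counting tableaux on column diagrams by a binomial determinant\<close>

definition col_cells :: "nat \<Rightarrow> (nat \<Rightarrow> nat) \<Rightarrow> (nat \<times> nat) set" where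
  "col_cells N h = {(i,j). j < N \<and> i < h j}"

definition ssyt_on :: "(nat \<times> nat) set \<Rightarrow> nat \<Rightarrow> ((nat \<times> nat) \<Rightarrow> nat) set" where
  "ssyt_on C n = {T. (\<forall>c\<in>C. T c \<in> {1..n}) \<and> (\<forall>c. c \<notin> C \<longrightarrow> T c = 0)
      \<and> (\<forall>i j. (i, Suc j) \<in> C \<longrightarrow> T (i, j) \<le> T (i, Suc j))
      \<and> (\<forall>i j. (Suc i, j) \<in> C \<longrightarrow> T (i, j) < T (Suc i, j))}"

definition antimono_upto :: "nat \<Rightarrow> (nat \<Rightarrow> 'a::linorder) \<Rightarrow> bool" where
  "antimono_upto N h \<longleftrightarrow> (\<forall>j. Suc j < N \<longrightarrow> h (Suc j) \<le> h j)"

lemma antimono_uptoD: assumes "antimono_upto N h" "j \<le> k" "k < N" shows "h k \<le> h j"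
  using assms(2,3)
proof (induction k)
  case (Suc k)
  show ?case
  proof (cases "j = Suc k")
    case False
    then have "h k \<le> h j" using Suc by auto
    moreover have "h (Suc k) \<le> h k" using assms(1) Suc.prems unfolding antimono_upto_def by auto
    ultimately show ?thesis by order
  qed simp
qed simp

lemma finite_col_cells: "finite (col_cells N h)"
proof -
  have "col_cells N h \<subseteq> {..<(\<Sum>k<N. h k)} \<times> {..<N}"
  proof
    fix c assume "c \<in> col_cells N h"
    then obtain i j where c: "c = (i,j)" "j < N" "i < h j" by (auto simp: col_cells_def)
    have "h j \<le> (\<Sum>k<N. h k)" using c by (intro member_le_sum) auto
    then show "c \<in> {..<(\<Sum>k<N. h k)} \<times> {..<N}" using c by auto
  qed
  then show ?thesis by (rule finite_subset) auto
qed

lemma finite_ssyt_on: assumes "finite C" shows "finite (ssyt_on C n)"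
proof -
  have "ssyt_on C n \<subseteq> {f. \<forall>x. (x \<in> C \<longrightarrow> f x \<in> {1..n}) \<and> (x \<notin> C \<longrightarrow> f x = 0)}"
    by (auto simp: ssyt_on_def)
  then show ?thesis by (rule finite_subset) (intro finite_set_of_finite_funs assms, simp)
qed

lemma ssyt_on_le: "T \<in> ssyt_on C n \<Longrightarrow> T c \<le> n"
  unfolding ssyt_on_def by (cases c; cases "c \<in> C") auto

lemma ssyt_on_outside: "T \<in> ssyt_on C n \<Longrightarrow> c \<notin> C \<Longrightarrow> T c = 0"
  unfolding ssyt_on_def by (cases c) auto

lemma ssyt_on_col_less:
  assumes T: "T \<in> ssyt_on (col_cells N h) n" and k: "k < N" and ii: "i < i'" "i' < h k"
  shows "T (i,k) < T (i',k)"
  using ii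
proof (induction i')
  case (Suc i')
  have "T (i', k) < T (Suc i', k)" using T Suc.prems k by (auto simp: ssyt_on_def col_cells_def)
  then show ?case using Suc by (cases "i = i'") auto
qed simp

definition drop_tops :: "(nat \<Rightarrow> nat) \<Rightarrow> nat set \<Rightarrow> nat \<Rightarrow> nat" where
  "drop_tops h S k = h k - (if k \<in> S then 1 else 0)"

text \<open>Sets of columns whose top cells can be removed together; the removed cells form a
  horizontal strip.\<close>
definition hstrip_sets :: "nat \<Rightarrow> (nat \<Rightarrow> nat) \<Rightarrow> nat set set" where
  "hstrip_sets N h = {S. S \<subseteq> {..<N} \<and> (\<forall>k\<in>S. 0 < h k) \<and> antimono_upto N (drop_tops h S)}"

definition max_cols ::
    "nat \<Rightarrow> (nat \<Rightarrow> nat) \<Rightarrow> nat \<Rightarrow> ((nat \<times> nat) \<Rightarrow> nat) \<Rightarrow> nat set" where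
  "max_cols N h n T = {k. k < N \<and> 0 < h k \<and> T (h k - 1, k) = Suc n}"

lemma finite_hstrip_sets: "finite (hstrip_sets N h)"
  by (rule finite_subset[of _ "Pow {..<N}"]) (auto simp: hstrip_sets_def)

lemma max_cols_in_hstrip_sets:
  assumes T: "T \<in> ssyt_on (col_cells N h) (Suc n)" and d: "antimono_upto N h"
  shows "max_cols N h n T \<in> hstrip_sets N h"
proof -
  let ?S = "max_cols N h n T"
  have "antimono_upto N (drop_tops h ?S)"
    unfolding antimono_upto_def
  proof (intro allI impI)
    fix j assume j: "Suc j < N"
    have hj: "h (Suc j) \<le> h j" using d j by (auto simp: antimono_upto_def)
    show "drop_tops h ?S (Suc j) \<le> drop_tops h ?S j"
    proof (cases "h (Suc j) < h j \<or> j \<notin> ?S")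
      case True then show ?thesis using hj by (auto simp: drop_tops_def)
    next
      case False
      then have eq: "h (Suc j) = h j" and jS: "j \<in> ?S" using hj by auto
      then have pos: "0 < h j" and Tj: "T (h j - 1, j) = Suc n" by (auto simp: max_cols_def)
      have cell: "(h j - 1, Suc j) \<in> col_cells N h" using j eq pos by (auto simp: col_cells_def)
      then have "T (h j - 1, j) \<le> T (h j - 1, Suc j)" using T by (auto simp: ssyt_on_def)
      moreover have "T (h j - 1, Suc j) \<le> Suc n" by (rule ssyt_on_le[OF T])
      ultimately have "T (h (Suc j) - 1, Suc j) = Suc n" using Tj eq by auto
      then have "Suc j \<in> ?S" using j eq pos by (auto simp: max_cols_def)
      then show ?thesis using jS eq by (auto simp: drop_tops_def)
    qed
  qed
  then show ?thesis by (auto simp: hstrip_sets_def max_cols_def)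
qed

lemma col_cells_drop_tops_subset: "col_cells N (drop_tops h S) \<subseteq> col_cells N h"
  by (auto simp: col_cells_def drop_tops_def)

lemma col_cells_diff_drop_tops:
  "c \<in> col_cells N h - col_cells N (drop_tops h S) \<longleftrightarrow> (\<exists>k\<in>S. k < N \<and> 0 < h k \<and> c = (h k - 1, k))"
  by (cases c) (auto simp: col_cells_def drop_tops_def split: if_splits)

lemma ssyt_on_le_off_max_cols:
  assumes T: "T \<in> ssyt_on (col_cells N h) (Suc n)" and S: "max_cols N h n T = S" and c: "c \<in> col_cells N (drop_tops h S)"
  shows "T c \<le> n"
proof -
  obtain i k where c': "c = (i,k)" "k < N" "i < drop_tops h S k" using c by (auto simp: col_cells_def)
  have ih: "i < h k" using c' by (auto simp: drop_tops_def split: if_splits)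
  show ?thesis
  proof (cases "i < h k - 1")
    case True
    then have "T (i,k) < T (h k - 1, k)" using ssyt_on_col_less[OF T c'(2) True] ih by auto
    moreover have "T (h k - 1, k) \<le> Suc n" by (rule ssyt_on_le[OF T])
    ultimately show ?thesis using c' by auto
  next
    case False
    then have i: "i = h k - 1" using ih by auto
    then have "k \<notin> S" using c' by (auto simp: drop_tops_def)
    then have "T (h k - 1, k) \<noteq> Suc n" using S c' ih by (auto simp: max_cols_def)
    moreover have "T (h k - 1, k) \<le> Suc n" by (rule ssyt_on_le[OF T])
    ultimately show ?thesis using c' i by auto
  qed
qed

definition erase_max :: "nat \<Rightarrow> ((nat \<times> nat) \<Rightarrow> nat) \<Rightarrow> (nat \<times> nat) \<Rightarrow> nat" where
  "erase_max n T = (\<lambda>c. if T c = Suc n then 0 else T c)"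

definition fill_tops ::
    "nat \<Rightarrow> (nat \<Rightarrow> nat) \<Rightarrow> nat set \<Rightarrow> nat \<Rightarrow> ((nat \<times> nat) \<Rightarrow> nat) \<Rightarrow> (nat \<times> nat) \<Rightarrow> nat" where
  "fill_tops N h S n T' = (\<lambda>c. if c \<in> col_cells N h - col_cells N (drop_tops h S) then Suc n else T' c)"

definition ssyt_max_cols ::
    "nat \<Rightarrow> (nat \<Rightarrow> nat) \<Rightarrow> nat \<Rightarrow> nat set \<Rightarrow> ((nat \<times> nat) \<Rightarrow> nat) set" where
  "ssyt_max_cols N h n S = {T \<in> ssyt_on (col_cells N h) (Suc n). max_cols N h n T = S}"

lemma erase_max_in_ssyt_on:
  assumes T: "T \<in> ssyt_max_cols N h n S"
  shows "erase_max n T \<in> ssyt_on (col_cells N (drop_tops h S)) n"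
proof -
  have T1: "T \<in> ssyt_on (col_cells N h) (Suc n)" and S: "max_cols N h n T = S" using T by (auto simp: ssyt_max_cols_def)
  have fb: "T c \<le> n" if "c \<in> col_cells N (drop_tops h S)" for c using ssyt_on_le_off_max_cols[OF T1 S that] .
  have sub: "c \<in> col_cells N h" if "c \<in> col_cells N (drop_tops h S)" for c using col_cells_drop_tops_subset that by auto
  have r1: "erase_max n T c = T c" if "c \<in> col_cells N (drop_tops h S)" for c using fb[OF that] by (auto simp: erase_max_def)
  have rle: "erase_max n T c \<le> T c" for c by (auto simp: erase_max_def)
  show ?thesis unfolding ssyt_on_def
  proof (intro CollectI conjI allI impI ballI)
    fix c assume c: "c \<in> col_cells N (drop_tops h S)"
    then show "erase_max n T c \<in> {1..n}" using r1[OF c] fb[OF c] sub[OF c] T1 by (auto simp: ssyt_on_def)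
  next
    fix c assume c: "c \<notin> col_cells N (drop_tops h S)"
    show "erase_max n T c = 0"
    proof (cases "c \<in> col_cells N h")
      case True
      then obtain k where k: "k \<in> S" "k < N" "0 < h k" "c = (h k - 1, k)" using c col_cells_diff_drop_tops[of c N h S] by auto
      then have "T c = Suc n" using S by (auto simp: max_cols_def)
      then show ?thesis by (simp add: erase_max_def)
    next
      case False then show ?thesis using ssyt_on_outside[OF T1 False] by (auto simp: erase_max_def)
    qed
  next
    fix i j assume c: "(i, Suc j) \<in> col_cells N (drop_tops h S)"
    have "T (i,j) \<le> T (i, Suc j)" using T1 sub[OF c] by (auto simp: ssyt_on_def)
    then show "erase_max n T (i, j) \<le> erase_max n T (i, Suc j)" using r1[OF c] rle[of "(i,j)"] by linarith
  next
    fix i j assume c: "(Suc i, j) \<in> col_cells N (drop_tops h S)"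
    have "T (i,j) < T (Suc i, j)" using T1 sub[OF c] by (auto simp: ssyt_on_def)
    then show "erase_max n T (i, j) < erase_max n T (Suc i, j)" using r1[OF c] rle[of "(i,j)"] by linarith
  qed
qed

lemma fill_tops_in_ssyt_on:
  assumes S: "S \<in> hstrip_sets N h" and T': "T' \<in> ssyt_on (col_cells N (drop_tops h S)) n"
  shows "fill_tops N h S n T' \<in> ssyt_on (col_cells N h) (Suc n)"
  unfolding ssyt_on_def
proof (intro CollectI conjI allI impI ballI)
  let ?g = "drop_tops h S"
  let ?E = "fill_tops N h S n T'"
  have Tb: "T' c \<le> n" for c by (rule ssyt_on_le[OF T'])
  have E_in: "?E c = T' c" if "c \<in> col_cells N ?g" for c using that by (auto simp: fill_tops_def)
  {
    fix c assume c: "c \<in> col_cells N h"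
    show "?E c \<in> {1..Suc n}"
    proof (cases "c \<in> col_cells N ?g")
      case True then show ?thesis using T' Tb[of c] E_in by (auto simp: ssyt_on_def)
    qed (use c in \<open>auto simp: fill_tops_def\<close>)
  next
    fix c assume "c \<notin> col_cells N h"
    then have "c \<notin> col_cells N ?g" using col_cells_drop_tops_subset by blast
    with \<open>c \<notin> col_cells N h\<close> show "?E c = 0"
      using ssyt_on_outside[OF T'] by (simp add: fill_tops_def)
  next
    fix i j assume c: "(i, Suc j) \<in> col_cells N h"
    show "?E (i, j) \<le> ?E (i, Suc j)"
    proof (cases "(i, Suc j) \<in> col_cells N ?g")
      case False
      then show ?thesis using c Tb[of "(i, j)"] by (auto simp: fill_tops_def)
    next
      case True
      then have "i < ?g (Suc j)" "Suc j < N" by (auto simp: col_cells_def)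
      moreover have "?g (Suc j) \<le> ?g j"
        using S \<open>Suc j < N\<close> by (auto simp: hstrip_sets_def antimono_upto_def)
      ultimately have "(i, j) \<in> col_cells N ?g" by (auto simp: col_cells_def)
      then show ?thesis using True T' E_in by (auto simp: ssyt_on_def)
    qed
  next
    fix i j assume c: "(Suc i, j) \<in> col_cells N h"
    show "?E (i, j) < ?E (Suc i, j)"
    proof (cases "(Suc i, j) \<in> col_cells N ?g")
      case False
      then obtain k where "k \<in> S" "(Suc i, j) = (h k - 1, k)"
        using c col_cells_diff_drop_tops[of "(Suc i, j)" N h S] by auto
      then have "(i, j) \<in> col_cells N ?g" using c by (auto simp: col_cells_def drop_tops_def)
      then show ?thesis using False c E_in Tb by (auto simp: fill_tops_def le_imp_less_Suc)
    next
      case True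
      have "(i, j) \<in> col_cells N ?g" using True by (auto simp: col_cells_def)
      then show ?thesis using True T' E_in by (auto simp: ssyt_on_def)
    qed
  }
qed

lemma max_cols_fill_tops:
  assumes S: "S \<in> hstrip_sets N h" and T': "T' \<in> ssyt_on (col_cells N (drop_tops h S)) n"
  shows "max_cols N h n (fill_tops N h S n T') = S"
proof (intro equalityI subsetI)
  fix k assume "k \<in> max_cols N h n (fill_tops N h S n T')"
  then have k: "k < N" "0 < h k" "fill_tops N h S n T' (h k - 1, k) = Suc n"
    by (auto simp: max_cols_def)
  show "k \<in> S"
  proof (rule ccontr)
    assume "k \<notin> S"
    then have "(h k - 1, k) \<in> col_cells N (drop_tops h S)"
      using k by (auto simp: col_cells_def drop_tops_def)
    then show False using k ssyt_on_le[OF T', of "(h k - 1, k)"] by (simp add: fill_tops_def)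
  qed
next
  fix k assume k: "k \<in> S"
  then have "k < N" "0 < h k" using S by (auto simp: hstrip_sets_def)
  moreover have "(h k - 1, k) \<in> col_cells N h - col_cells N (drop_tops h S)"
    using col_cells_diff_drop_tops[of "(h k - 1, k)" N h S] k calculation by auto
  ultimately show "k \<in> max_cols N h n (fill_tops N h S n T')"
    by (auto simp: max_cols_def fill_tops_def)
qed

lemma fill_tops_erase_max:
  assumes T: "T \<in> ssyt_max_cols N h n S"
  shows "fill_tops N h S n (erase_max n T) = T"
proof
  fix c
  have T1: "T \<in> ssyt_on (col_cells N h) (Suc n)" and St: "max_cols N h n T = S"
    using T by (auto simp: ssyt_max_cols_def)
  show "fill_tops N h S n (erase_max n T) c = T c"
  proof (cases "c \<in> col_cells N h - col_cells N (drop_tops h S)")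
    case True
    then obtain k where "k \<in> S" "k < N" "0 < h k" "c = (h k - 1, k)"
      using col_cells_diff_drop_tops[of c N h S] by auto
    then have "T c = Suc n" using St by (auto simp: max_cols_def)
    then show ?thesis using True by (simp add: fill_tops_def)
  next
    case False
    have "T c \<noteq> Suc n"
    proof (cases "c \<in> col_cells N (drop_tops h S)")
      case True then show ?thesis using ssyt_on_le_off_max_cols[OF T1 St True] by simp
    next
      case False
      then have "c \<notin> col_cells N h" using \<open>c \<notin> col_cells N h - col_cells N (drop_tops h S)\<close> by auto
      then show ?thesis using ssyt_on_outside[OF T1] by auto
    qed
    then show ?thesis using False by (simp add: fill_tops_def erase_max_def)
  qed
qed

lemma erase_max_fill_tops:
  assumes T': "T' \<in> ssyt_on (col_cells N (drop_tops h S)) n"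
  shows "erase_max n (fill_tops N h S n T') = T'"
proof
  fix c
  show "erase_max n (fill_tops N h S n T') c = T' c"
  proof (cases "c \<in> col_cells N h - col_cells N (drop_tops h S)")
    case True
    then have "T' c = 0" using ssyt_on_outside[OF T'] by auto
    then show ?thesis using True by (simp add: fill_tops_def erase_max_def)
  next
    case False
    then have "fill_tops N h S n T' c = T' c" unfolding fill_tops_def by (rule if_not_P)
    then show ?thesis using ssyt_on_le[OF T', of c] by (simp add: erase_max_def)
  qed
qed

lemma bij_betw_erase_max:
  assumes S: "S \<in> hstrip_sets N h"
  shows "bij_betw (erase_max n) (ssyt_max_cols N h n S) (ssyt_on (col_cells N (drop_tops h S)) n)"
proof (rule bij_betw_byWitness[where f'="fill_tops N h S n"])
  show "erase_max n ` ssyt_max_cols N h n S \<subseteq> ssyt_on (col_cells N (drop_tops h S)) n"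
    using erase_max_in_ssyt_on by blast
  show "fill_tops N h S n ` ssyt_on (col_cells N (drop_tops h S)) n \<subseteq> ssyt_max_cols N h n S"
    using fill_tops_in_ssyt_on[OF S] max_cols_fill_tops[OF S] by (auto simp: ssyt_max_cols_def)
qed (simp_all add: fill_tops_erase_max erase_max_fill_tops)

text \<open>The cells holding the largest entry \<open>n + 1\<close> are the tops of the columns in \<open>max_cols\<close>;
  erasing them leaves a tableau with entries at most \<open>n\<close> on a smaller column diagram.\<close>
lemma card_ssyt_on_Suc:
  assumes d: "antimono_upto N h"
  shows "card (ssyt_on (col_cells N h) (Suc n)) = (\<Sum>S\<in>hstrip_sets N h. card (ssyt_on (col_cells N (drop_tops h S)) n))"
proof -
  have U: "ssyt_on (col_cells N h) (Suc n) = (\<Union>S\<in>hstrip_sets N h. ssyt_max_cols N h n S)"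
    using max_cols_in_hstrip_sets[OF _ d] by (auto simp: ssyt_max_cols_def)
  have fin: "\<forall>S\<in>hstrip_sets N h. finite (ssyt_max_cols N h n S)"
    using finite_ssyt_on[OF finite_col_cells] by (auto simp: ssyt_max_cols_def)
  have "card (ssyt_on (col_cells N h) (Suc n)) = (\<Sum>S\<in>hstrip_sets N h. card (ssyt_max_cols N h n S))"
    unfolding U by (rule card_UN_disjoint[OF finite_hstrip_sets fin]) (auto simp: ssyt_max_cols_def)
  also have "\<dots> = (\<Sum>S\<in>hstrip_sets N h. card (ssyt_on (col_cells N (drop_tops h S)) n))"
    by (rule sum.cong[OF refl]) (rule bij_betw_same_card[OF bij_betw_erase_max])
  finally show ?thesis .
qed

definition binom_det :: "nat \<Rightarrow> nat \<Rightarrow> (nat \<Rightarrow> nat) \<Rightarrow> real" where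
  "binom_det N n h = det (mat N N (\<lambda>(j,k). binom_int n (int (h k) - int k + int j)))"

lemma det_binom_int_drop_tops_eq_0:
  assumes h: "antimono_upto N h" and SN: "S \<subseteq> {..<N}" and nS: "S \<notin> hstrip_sets N h"
  shows "det (mat N N (\<lambda>(j,k). binom_int n (int (h k) - (if k \<in> S then 1 else 0) - int k + int j))) = 0"
proof -
  define g where "g k = int (h k) - (if k \<in> S then 1 else 0)" for k
  show ?thesis
  proof (cases "antimono_upto N g")
    case False
    then obtain j where j: "Suc j < N" "g j < g (Suc j)" by (auto simp: antimono_upto_def not_le)
    moreover have "h (Suc j) \<le> h j" using h j(1) by (auto simp: antimono_upto_def)
    ultimately have "h (Suc j) = h j" "j \<in> S" "Suc j \<notin> S" by (auto simp: g_def split: if_splits)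
    then show ?thesis
      using j(1) by (intro det_mat_equal_cols[of j N "Suc j"]) (auto simp: algebra_simps)
  next
    case True
    have "\<exists>k\<in>S. h k = 0"
    proof (rule ccontr)
      assume "\<not> (\<exists>k\<in>S. h k = 0)"
      then have "g k = int (drop_tops h S k)" for k by (auto simp: g_def drop_tops_def)
      then have "S \<in> hstrip_sets N h"
        using True SN \<open>\<not> (\<exists>k\<in>S. h k = 0)\<close> by (auto simp: hstrip_sets_def antimono_upto_def)
      with nS show False ..
    qed
    then obtain k where k: "k \<in> S" "h k = 0" "k < N" using SN by auto
    then have "g (N - 1) \<le> -1" using antimono_uptoD[OF True, of k "N - 1"] by (simp add: g_def)
    then show ?thesis
      using k(3) by (intro det_mat_zero_col[of "N - 1"]) (auto simp: binom_int_def g_def)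
  qed
qed

lemma binom_det_Suc:
  assumes h: "antimono_upto N h"
  shows "binom_det N (Suc n) h = (\<Sum>S\<in>hstrip_sets N h. binom_det N n (drop_tops h S))"
proof -
  define D where "D S = det (mat N N (\<lambda>(j,k).
      binom_int n (int (h k) - (if k \<in> S then 1 else 0) - int k + int j)))" for S
  have "binom_det N (Suc n) h = det (mat N N (\<lambda>(j,k).
      binom_int n (int (h k) - int k + int j) + binom_int n (int (h k) - int k + int j - 1)))"
    unfolding binom_det_def by (simp add: binom_int_Suc)
  also have "\<dots> = (\<Sum>S\<in>Pow {..<N}. D S)"
    unfolding det_mat_add_cols D_def
    by (intro sum.cong refl arg_cong[where f=det] cong_mat) (auto simp: algebra_simps)
  also have "\<dots> = (\<Sum>S\<in>hstrip_sets N h. D S)"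
  proof (rule sum.mono_neutral_right)
    show "\<forall>S\<in>Pow {..<N} - hstrip_sets N h. D S = 0"
      unfolding D_def using det_binom_int_drop_tops_eq_0[OF h] by blast
  qed (auto simp: hstrip_sets_def)
  also have "\<dots> = (\<Sum>S\<in>hstrip_sets N h. binom_det N n (drop_tops h S))"
    by (intro sum.cong refl)
      (auto simp: D_def binom_det_def hstrip_sets_def drop_tops_def of_nat_diff Suc_leI
        intro!: arg_cong[where f=det] cong_mat)
  finally show ?thesis .
qed

lemma ssyt_on_empty: "ssyt_on {} n = {\<lambda>_. 0}"
  using ssyt_on_outside[of _ "{}" n] by (auto simp: ssyt_on_def)

theorem card_ssyt_on_eq_binom_det:
  assumes "antimono_upto N h"
  shows "real (card (ssyt_on (col_cells N h) n)) = binom_det N n h"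
  using assms
proof (induction n arbitrary: h)
  case 0
  show ?case
  proof (cases "\<forall>k<N. h k = 0")
    case True
    then have C: "col_cells N h = {}" by (auto simp: col_cells_def)
    then have c1: "card (ssyt_on (col_cells N h) 0) = 1" by (simp add: ssyt_on_empty)
    have "mat N N (\<lambda>(j,k). binom_int 0 (int (h k) - int k + int j)) = 1\<^sub>m N"
      by (rule eq_matI) (use True in \<open>auto simp: binom_int_def\<close>)
    then have "binom_det N 0 h = 1" by (simp add: binom_det_def)
    then show ?thesis using c1 by simp
  next
    case False
    then obtain k where k: "k < N" "0 < h k" by auto
    then have N0: "0 < N" by auto
    have "h k \<le> h 0" by (rule antimono_uptoD[OF "0.prems"]) (use k in auto)
    then have h0: "0 < h 0" using k by auto
    then have cell: "(0,0) \<in> col_cells N h" using N0 by (auto simp: col_cells_def)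
    have "ssyt_on (col_cells N h) 0 = {}" using cell by (auto simp: ssyt_on_def)
    moreover have "binom_det N 0 h = 0" unfolding binom_det_def
      by (rule det_mat_zero_col[OF N0]) (use h0 in \<open>auto simp: binom_int_def\<close>)
    ultimately show ?thesis by simp
  qed
next
  case (Suc n)
  have "real (card (ssyt_on (col_cells N h) (Suc n))) = (\<Sum>S\<in>hstrip_sets N h. real (card (ssyt_on (col_cells N (drop_tops h S)) n)))"
    by (simp add: card_ssyt_on_Suc[OF Suc.prems])
  also have "\<dots> = (\<Sum>S\<in>hstrip_sets N h. binom_det N n (drop_tops h S))"
    by (rule sum.cong[OF refl]) (rule Suc.IH, auto simp: hstrip_sets_def)
  also have "\<dots> = binom_det N (Suc n) h" by (rule binom_det_Suc[OF Suc.prems, symmetric])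
  finally show ?case .
qed

lemma binom_det_zero_heights: "binom_det N n (\<lambda>_. 0) = 1"
proof -
  have "col_cells N (\<lambda>_. 0) = {}" by (simp add: col_cells_def)
  then have "real (card (ssyt_on (col_cells N (\<lambda>_. 0)) n)) = 1" by (simp add: ssyt_on_empty)
  then show ?thesis
    using card_ssyt_on_eq_binom_det[of N "\<lambda>_. 0" n] by (simp add: antimono_upto_def)
qed

section \<open>Shifting the heights of a binomial determinant\<close>

lemma binom_weight_ratio:
  fixes \<gamma> \<delta> N k hk :: nat
  assumes "k < N" and "hk \<le> \<gamma> + k"
  shows "binom_weight (\<gamma>+\<delta>) N (int \<delta> + int hk - int k) * binom_weight \<gamma> N (- int k) =
    binom_weight (\<gamma>+\<delta>) N (int \<delta> - int k) * binom_weight \<gamma> N (int hk - int k) *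
    (fact (\<delta> + N - Suc k) * fact (hk + N - Suc k) / (fact (N - Suc k) * fact (\<delta> + hk + N - Suc k)))"
proof -
  have "nat (int \<delta> + int hk - int k + int N - 1) = \<delta> + hk + N - Suc k"
    "nat (int (\<gamma>+\<delta>) - (int \<delta> + int hk - int k)) = \<gamma> + k - hk"
    "nat (- int k + int N - 1) = N - Suc k" "nat (int \<gamma> - - int k) = \<gamma> + k"
    "nat (int \<delta> - int k + int N - 1) = \<delta> + N - Suc k" "nat (int (\<gamma>+\<delta>) - (int \<delta> - int k)) = \<gamma> + k"
    "nat (int hk - int k + int N - 1) = hk + N - Suc k" "nat (int \<gamma> - (int hk - int k)) = \<gamma> + k - hk"
    using assms by linarith+
  moreover have "A / (a * b) * (B / (c * d)) = A / (e * d) * (B / (f * b)) * (e * f / (c * a))"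
    if "a \<noteq> 0" "b \<noteq> 0" "c \<noteq> 0" "d \<noteq> 0" "e \<noteq> 0" "f \<noteq> 0" for A B a b c d e f :: real
    using that by (simp add: field_simps)
  ultimately show ?thesis by (simp add: binom_weight_def)
qed

text \<open>The factorisation at zero heights, where \<open>binom_det N \<gamma> (\<lambda>_. 0) = 1\<close>, eliminates the
  unknown coefficient determinants and the Vandermonde determinant.\<close>
lemma det_binom_int_shift_heights:
  fixes \<gamma> \<delta> N :: nat and h :: "nat \<Rightarrow> nat"
  shows "det (mat N N (\<lambda>(j,k). binom_int (\<gamma>+\<delta>) (int \<delta> + int (h k) - int k + int j))) =
    det (mat N N (\<lambda>(j,k). binom_int (\<gamma>+\<delta>) (int \<delta> - int k + int j))) * binom_det N \<gamma> h *
    (\<Prod>k<N. fact (\<delta> + N - Suc k) * fact (h k + N - Suc k) / (fact (N - Suc k) * fact (\<delta> + h k + N - Suc k)))"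
    (is "?L = ?D * ?S * ?R")
proof (cases "\<exists>k<N. \<gamma> + k < h k")
  case True
  then obtain k where k: "k < N" "\<gamma> + k < h k" by auto
  then have "?L = 0" "?S = 0" unfolding binom_det_def
    by (auto intro!: det_mat_zero_col[OF k(1)] simp: binom_int_def)
  then show ?thesis by simp
next
  case False
  define x where "x k = int \<delta> + int (h k) - int k" for k
  define x0 where "x0 k = int \<delta> - int k" for k
  define V where "V y = det (mat N N (\<lambda>(m,k). real_of_int (y k) ^ m))" for y
  define C1 where "C1 = det (mat N N (\<lambda>(j,m). coeff (binom_poly (\<gamma>+\<delta>) N 0 j) m))"
  define C2 where "C2 = det (mat N N (\<lambda>(j,m). coeff (binom_poly \<gamma> N \<delta> j) m))"
  define W1 where "W1 y = (\<Prod>k<N. binom_weight (\<gamma>+\<delta>) N (y k))" for y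
  define W2 where "W2 y = (\<Prod>k<N. binom_weight \<gamma> N (y k - int \<delta>))" for y
  have hk: "int (h k) - int k \<le> int \<gamma>" if "k < N" for k using False that by auto
  have L: "?L = C1 * V x * W1 x"
    using det_binom_int_factor[of N x 0 "\<gamma>+\<delta>"] hk by (simp add: x_def C1_def V_def W1_def)
  have D: "?D = C1 * V x0 * W1 x0"
    using det_binom_int_factor[of N x0 0 "\<gamma>+\<delta>"] by (simp add: x0_def C1_def V_def W1_def)
  have S: "?S = C2 * V x * W2 x"
    using det_binom_int_factor[of N x "int \<delta>" \<gamma>] hk
    by (simp add: x_def C2_def V_def W2_def binom_det_def algebra_simps)
  have one: "1 = C2 * V x0 * W2 x0"
    using det_binom_int_factor[of N x0 "int \<delta>" \<gamma>] binom_det_zero_heights[of N \<gamma>]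
    by (simp add: x0_def C2_def V_def W2_def binom_det_def algebra_simps)
  have R: "W1 x * W2 x0 = W1 x0 * W2 x * ?R"
  proof -
    have "binom_weight (\<gamma>+\<delta>) N (x k) * binom_weight \<gamma> N (x0 k - int \<delta>) =
        binom_weight (\<gamma>+\<delta>) N (x0 k) * binom_weight \<gamma> N (x k - int \<delta>) *
        (fact (\<delta> + N - Suc k) * fact (h k + N - Suc k) / (fact (N - Suc k) * fact (\<delta> + h k + N - Suc k)))"
      if "k < N" for k
      using binom_weight_ratio[OF that, of "h k" \<gamma> \<delta>] hk[OF that] by (simp add: x_def x0_def)
    then show ?thesis
      unfolding W1_def W2_def prod.distrib[symmetric] by (intro prod.cong) auto
  qed
  have "W1 x0 * W2 x \<noteq> 0"
    by (simp add: W1_def W2_def binom_weight_def)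
  moreover have "?L * (W1 x0 * W2 x) = ?D * ?S * ?R * (W1 x0 * W2 x)"
  proof -
    have "?D * ?S * (W1 x * W2 x0) = (C2 * V x0 * W2 x0) * (?L * (W1 x0 * W2 x))"
      unfolding L D S by (simp add: ac_simps)
    then show ?thesis unfolding R one[symmetric] by (simp add: ac_simps) metis
  qed
  ultimately show ?thesis by simp
qed

section \<open>The Toeplitz minors of \<open>\<phi>\<^sub>\<gamma>\<^sub>,\<^sub>\<delta>\<close>\<close>

lemma phi_coeff_eq_binom_int: "phi_coeff \<gamma> \<delta> t = binom_int (\<gamma> + \<delta>) (int \<delta> + t)"
  by (auto simp: phi_coeff_def binom_int_def)

lemma toeplitz_det_mu_phi_coeff:
  "toeplitz_det_mu (phi_coeff \<gamma> \<delta>) \<mu> N =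
    det (mat N N (\<lambda>(j,k). binom_int (\<gamma>+\<delta>) (int \<delta> + int (part_nth \<mu> (Suc k)) - int k + int j)))"
  unfolding toeplitz_det_mu_def phi_coeff_eq_binom_int
  by (intro arg_cong[where f=det] cong_mat) (auto simp: algebra_simps)

lemma toeplitz_det_phi_coeff:
  "toeplitz_det (phi_coeff \<gamma> \<delta>) N =
    det (mat N N (\<lambda>(j,k). binom_int (\<gamma>+\<delta>) (int \<delta> - int k + int j)))"
  unfolding toeplitz_det_def phi_coeff_eq_binom_int
  by (intro arg_cong[where f=det] cong_mat) (auto simp: algebra_simps)

lemma less_card_iff_mem_downward_closed:
  fixes A :: "nat set"
  assumes "finite A" and "\<And>a b. b \<in> A \<Longrightarrow> a \<le> b \<Longrightarrow> a \<in> A"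
  shows "j < card A \<longleftrightarrow> j \<in> A"
proof
  assume j: "j < card A"
  show "j \<in> A"
  proof (rule ccontr)
    assume "j \<notin> A"
    have "A \<subseteq> {..<j}"
    proof
      fix a assume "a \<in> A"
      then show "a \<in> {..<j}" using assms(2)[of a j] \<open>j \<notin> A\<close> by (cases "j \<le> a") auto
    qed
    then show False using card_mono[of "{..<j}" A] j by simp
  qed
next
  assume "j \<in> A"
  then have "{..j} \<subseteq> A" using assms(2) by auto
  then have "card {..j} \<le> card A" by (rule card_mono[OF assms(1)])
  then show "j < card A" by simp
qed

lemma antimono_upto_part_nth:
  assumes "is_partition \<mu>"
  shows "antimono_upto N (\<lambda>k. part_nth \<mu> (Suc k))"
proof -
  have "\<forall>i. Suc i < length \<mu> \<longrightarrow> \<mu> ! Suc i \<le> \<mu> ! i"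
    using assms by (simp add: is_partition_def sorted_rev_iff_nth_Suc)
  then show ?thesis by (auto simp: antimono_upto_def part_nth_def)
qed

lemma cells_conj_part:
  assumes p: "is_partition \<mu>" and N: "length \<mu> \<le> N"
  shows "cells (conj_part \<mu>) = col_cells N (\<lambda>k. part_nth \<mu> (Suc k))"
proof (cases "\<mu> = []")
  case True then show ?thesis by (auto simp: cells_def conj_part_def col_cells_def part_nth_def)
next
  case False
  let ?L = "length \<mu>"
  have mono: "\<mu> ! b \<le> \<mu> ! a" if "a \<le> b" "b < ?L" for a b
    using p that by (simp add: is_partition_def sorted_rev_nth_mono)
  have col: "j < card {t. t < ?L \<and> i < \<mu> ! t} \<longleftrightarrow> j < ?L \<and> i < \<mu> ! j" for i j
  proof -
    have "j < card {t. t < ?L \<and> i < \<mu> ! t} \<longleftrightarrow> j \<in> {t. t < ?L \<and> i < \<mu> ! t}"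
    proof (rule less_card_iff_mem_downward_closed)
      fix a b assume "b \<in> {t. t < ?L \<and> i < \<mu> ! t}" "a \<le> b"
      then show "a \<in> {t. t < ?L \<and> i < \<mu> ! t}" using mono[of a b] by auto
    qed simp
    then show ?thesis by simp
  qed
  have "(i,j) \<in> cells (conj_part \<mu>) \<longleftrightarrow> (i,j) \<in> col_cells N (\<lambda>k. part_nth \<mu> (Suc k))" for i j
  proof -
    have "(i,j) \<in> cells (conj_part \<mu>) \<longleftrightarrow> i < \<mu> ! 0 \<and> j < card {t. t < ?L \<and> i < \<mu> ! t}"
      using False by (auto simp: cells_def conj_part_def hd_conv_nth)
    also have "\<dots> \<longleftrightarrow> j < ?L \<and> i < \<mu> ! j"
      unfolding col using mono[of 0 j] by auto
    finally show ?thesis using N by (auto simp: col_cells_def part_nth_def)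
  qed
  then show ?thesis by auto
qed

lemma schur_eval_conj_part_eq_binom_det:
  assumes "is_partition \<mu>" and "length \<mu> \<le> N"
  shows "schur_eval (conj_part \<mu>) \<gamma> (\<lambda>_. 1) = binom_det N \<gamma> (\<lambda>k. part_nth \<mu> (Suc k))"
proof -
  have "SSYT (conj_part \<mu>) \<gamma> = ssyt_on (col_cells N (\<lambda>k. part_nth \<mu> (Suc k))) \<gamma>"
    by (simp add: SSYT_def ssyt_on_def cells_conj_part[OF assms])
  then show ?thesis
    using card_ssyt_on_eq_binom_det[OF antimono_upto_part_nth[OF assms(1)]]
    by (simp add: schur_eval_def)
qed

lemma barnesG_Suc_add: "barnesG (Suc (p + L)) = barnesG (Suc p) * (\<Prod>i<L. fact (p + i))"
proof (induction L)
  case (Suc L)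
  have "barnesG (Suc (p + Suc L)) = fact (p + L) * barnesG (Suc (p + L))"
    by (simp flip: barnesG.simps(3))
  then show ?case using Suc by (simp add: algebra_simps)
qed simp

lemma barnesG_Suc_pos: "barnesG (Suc p) > 0"
  by (induction p) simp_all

lemma barnesG_Suc_divide_eq_prod_fact:
  assumes "M \<le> n"
  shows "barnesG (Suc n) / barnesG (Suc (n - M)) = (\<Prod>k<M. fact (n - Suc k))"
proof -
  have "barnesG (Suc (n - M + M)) = barnesG (Suc (n - M)) * (\<Prod>i<M. fact (n - M + i))"
    by (rule barnesG_Suc_add)
  also have "(\<Prod>i<M. fact (n - M + i)) = (\<Prod>k<M. (fact (n - M + (M - Suc k)) :: real))"
    by (rule prod.nat_diff_reindex[symmetric])
  also have "\<dots> = (\<Prod>k<M. fact (n - Suc k))"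
    by (rule prod.cong) (use assms in auto)
  finally show ?thesis
    using assms barnesG_Suc_pos[of "n - M"] by (simp add: field_simps)
qed

lemma prod_fact_ratio_eq_barnesG:
  assumes "length \<mu> \<le> N"
  shows "(\<Prod>k<N. fact (\<delta> + N - Suc k) * fact (part_nth \<mu> (Suc k) + N - Suc k) /
      (fact (N - Suc k) * fact (\<delta> + part_nth \<mu> (Suc k) + N - Suc k))) =
    barnesG (N - length \<mu> + 1) / barnesG (N + 1)
    * (barnesG (\<delta> + N + 1) / barnesG (\<delta> + N - length \<mu> + 1))
    * (\<Prod>k = 1..length \<mu>. fact (part_nth \<mu> k + N - k) / fact (\<delta> + part_nth \<mu> k + N - k))"
proof -
  define M where "M = length \<mu>"
  define r :: "nat \<Rightarrow> real" where "r k = fact (\<delta> + N - Suc k) * fact (part_nth \<mu> (Suc k) + N - Suc k) /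
      (fact (N - Suc k) * fact (\<delta> + part_nth \<mu> (Suc k) + N - Suc k))" for k
  have "r k = 1" if "M \<le> k" for k
  proof -
    have "part_nth \<mu> (Suc k) = 0" using that by (simp add: part_nth_def M_def)
    then show ?thesis by (simp add: r_def)
  qed
  then have "(\<Prod>k<N. r k) = (\<Prod>k<M. r k)"
    using prod.atLeastLessThan_concat[of 0 M N r] assms
    by (simp add: atLeast0LessThan M_def)
  also have "\<dots> = (\<Prod>k<M. fact (\<delta> + N - Suc k)) / (\<Prod>k<M. fact (N - Suc k))
      * (\<Prod>k<M. fact (part_nth \<mu> (Suc k) + N - Suc k) / fact (\<delta> + part_nth \<mu> (Suc k) + N - Suc k))"
    by (simp add: r_def prod.distrib prod_dividef)
  also have "(\<Prod>k<M. fact (\<delta> + N - Suc k)) / (\<Prod>k<M. fact (N - Suc k)) =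
      (barnesG (Suc (\<delta> + N)) / barnesG (Suc (\<delta> + N - M))) / (barnesG (Suc N) / barnesG (Suc (N - M)))"
    using assms by (simp add: M_def barnesG_Suc_divide_eq_prod_fact)
  also have "\<dots> = barnesG (N - M + 1) / barnesG (N + 1) * (barnesG (\<delta> + N + 1) / barnesG (\<delta> + N - M + 1))"
    by (simp add: mult.commute)
  also have "(\<Prod>k<M. fact (part_nth \<mu> (Suc k) + N - Suc k) / fact (\<delta> + part_nth \<mu> (Suc k) + N - Suc k)) =
      (\<Prod>k = 1..M. fact (part_nth \<mu> k + N - k) / fact (\<delta> + part_nth \<mu> k + N - k) :: real)"
    by (simp add: prod.atLeast1_atMost_eq)
  finally show ?thesis by (simp add: r_def M_def)
qed

theorem mainTheorem7:
  fixes \<gamma> \<delta> N :: nat and \<mu> :: "nat list"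
  assumes "0 < \<gamma>" and "0 < \<delta>" and "is_partition \<mu>" and "length \<mu> \<le> N"
  shows "toeplitz_det_mu (phi_coeff \<gamma> \<delta>) \<mu> N =
    toeplitz_det (phi_coeff \<gamma> \<delta>) N
    * (barnesG (N - length \<mu> + 1) / barnesG (N + 1))
    * (barnesG (\<delta> + N + 1) / barnesG (\<delta> + N - length \<mu> + 1))
    * schur_eval (conj_part \<mu>) \<gamma> (\<lambda>_. 1)
    * (\<Prod>k = 1..length \<mu>. fact (part_nth \<mu> k + N - k) / fact (\<delta> + part_nth \<mu> k + N - k))"
proof -
  have "toeplitz_det_mu (phi_coeff \<gamma> \<delta>) \<mu> N =
      toeplitz_det (phi_coeff \<gamma> \<delta>) N * binom_det N \<gamma> (\<lambda>k. part_nth \<mu> (Suc k)) *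
      (\<Prod>k<N. fact (\<delta> + N - Suc k) * fact (part_nth \<mu> (Suc k) + N - Suc k) /
        (fact (N - Suc k) * fact (\<delta> + part_nth \<mu> (Suc k) + N - Suc k)))"
    unfolding toeplitz_det_mu_phi_coeff toeplitz_det_phi_coeff
    by (rule det_binom_int_shift_heights)
  then show ?thesis
    unfolding schur_eval_conj_part_eq_binom_det[OF assms(3,4)] prod_fact_ratio_eq_barnesG[OF assms(4)]
    by (simp only: mult.assoc mult.commute mult.left_commute)
qed

end
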